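(* Let $\lambda>0$, $\lambda_{max}>0$, $p\in(0,1]$, $r(q)=\min\{p/q,1\}$ for $q\in(0,1]$, and $\mathrm{TH}(q,\tilde q)=r(q)q\exp\!\big(-\frac{\lambda r(\tilde q)\tilde q}{\lambda_{max}}\big)$ for $q,\tilde q\in[0,1]$ (with $r(0)\cdot0=0$). Define the price of anarchy $$\mathrm{PoA}=\frac{\sup_{q\in(0,1]}\lambda\, r(q)q\exp\!\big(-\frac{\lambda r(q)q}{\lambda_{max}}\big)}{\inf_{q^*\ \mathrm{SNE}}\lambda\,\mathrm{TH}(q^*,q^* )},$$ where $q^*\in[0,1]$ is a symmetric Nash equilibrium (SNE) if $\mathrm{TH}(q^*,q^* )=\max_{q\in[0,1]}\mathrm{TH}(q,q^* )$. Then $\mathrm{PoA}=1$ if $p<\frac{\lambda_{max}}{\lambda}$, and $\mathrm{PoA}=\frac{\lambda_{max}}{e\,p\,\lambda\exp(-p\lambda/\lambda_{max})}$ otherwise.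
   Context: ALOHA model with energy-harvesting transmitters (energy arrivals i.i.d. Bernoulli($p$) per slot, infinite battery) located as a homogeneous Poisson point process of density $\lambda$ in $\mathbb{R}^2$; $r(q)$ is the stationary probability of a nonempty battery, $\mathrm{TH}(q,\tilde q)$ the throughput of a transmitter using probability $q$ while all others use $\tilde q$, the numerator of PoA is the globally optimal transmission capacity and the denominator is the transmission capacity at the worst SNE; $\lambda_{max}=\frac{1}{d^2\theta^{2/\alpha}\kappa(\alpha)}$, $\kappa(\alpha)=\frac{2\pi^2}{\alpha\sin(2\pi/\alpha)}$. *)

theory Defs
  imports Complex_Main
begin

text \<open>Stationary probability of a nonempty battery: r(q) = min(p/q, 1).
  In Isabelle p/0 = 0, so r p 0 = 0 and hence r(0)*0 = 0 as required.\<close>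
definition r :: "real \<Rightarrow> real \<Rightarrow> real" where
  "r p q = min (p / q) 1"

text \<open>Throughput TH(q, qt) of a transmitter using q while all others use qt.\<close>
definition TH :: "real \<Rightarrow> real \<Rightarrow> real \<Rightarrow> real \<Rightarrow> real \<Rightarrow> real" where
  "TH p lam lmax q qt = r p q * q * exp (- (lam * r p qt * qt) / lmax)"

definition SNE :: "real \<Rightarrow> real \<Rightarrow> real \<Rightarrow> real \<Rightarrow> bool" where
  "SNE p lam lmax qs \<longleftrightarrow> qs \<in> {0..1} \<and>
     (\<forall>q\<in>{0..1}. TH p lam lmax q qs \<le> TH p lam lmax qs qs)"

definition PoA :: "real \<Rightarrow> real \<Rightarrow> real \<Rightarrow> real" where
  "PoA p lam lmax =
     Sup ((\<lambda>q. lam * r p q * q * exp (- (lam * r p q * q) / lmax)) ` {0<..1})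
     / Inf ((\<lambda>q. lam * TH p lam lmax q q) ` {q. SNE p lam lmax q})"

end

theory Submission
  imports Defs
begin

text \<open>Since r(q) q = min p q, every transmitter's throughput is min p q times an
  interference factor depending only on the others. Hence q is a symmetric Nash
  equilibrium exactly when q \<ge> p, and all equilibria give capacity
  \<lambda> p exp(-\<lambda> p / \<lambda>max). The optimum maximises
  \<lambda> x exp(-\<lambda> x / \<lambda>max) over x = min p q \<in> (0, p]: the function
  x exp(-c x) increases up to 1/c, where it attains exp(-1)/c, so the optimum is at
  x = p when p \<le> \<lambda>max / \<lambda> and equals \<lambda>max / e otherwise.\<close>

lemma r_mult_self: "p > 0 \<Longrightarrow> q \<ge> 0 \<Longrightarrow> r p q * q = min p q"
  unfolding r_def by (cases "q = 0") (auto simp: min_def field_simps)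

lemma TH_eq_min:
  assumes "p > 0" "q \<ge> 0" "qt \<ge> 0"
  shows "TH p lam lmax q qt = min p q * exp (- (lam * min p qt) / lmax)"
  using r_mult_self[OF assms(1,2)] r_mult_self[OF assms(1,3)]
  by (simp add: TH_def mult.assoc)

lemma mult_exp_neg_le_exp_neg_one: "(y::real) * exp (- y) \<le> exp (-1)"
proof -
  have "y \<le> exp (y - 1)" using exp_ge_add_one_self[of "y - 1"] by simp
  hence "y * exp (- y) \<le> exp (y - 1) * exp (- y)" by (simp add: mult_right_mono)
  also have "\<dots> = exp (-1)" by (simp flip: exp_add)
  finally show ?thesis .
qed

lemma mult_exp_neg_mono:
  fixes c x y :: real
  assumes "0 \<le> x" "x \<le> y" "c * y \<le> 1"
  shows "x * exp (- (c * x)) \<le> y * exp (- (c * y))"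
proof (cases "x = 0")
  case True
  then show ?thesis using assms by simp
next
  case False
  then have y: "y > 0" using assms by linarith
  define t where "t = x / y"
  have t: "0 < t" "t \<le> 1" using assms False y by (auto simp: t_def field_simps)
  have "(1 - c * y) * (t - 1) \<le> 0" using assms t by (intro mult_nonneg_nonpos) auto
  have "t \<le> exp (t - 1)" using exp_ge_add_one_self[of "t - 1"] by simp
  also have "\<dots> \<le> exp (c * y * (t - 1))"
    using \<open>(1 - c * y) * (t - 1) \<le> 0\<close> by (simp add: algebra_simps)
  also have "\<dots> = exp (c * x - c * y)" using y by (simp add: t_def field_simps)
  finally have "t * exp (- (c * x)) \<le> exp (c * x - c * y) * exp (- (c * x))"
    by (intro mult_right_mono) auto
  also have "\<dots> = exp (- (c * y))" by (simp flip: exp_add)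
  finally have "y * (t * exp (- (c * x))) \<le> y * exp (- (c * y))" using y by simp
  then show ?thesis using y by (simp add: t_def)
qed

lemma SNE_iff:
  assumes "0 < p" "p \<le> 1"
  shows "SNE p lam lmax q \<longleftrightarrow> p \<le> q \<and> q \<le> 1"
proof -
  define E where "E = exp (- (lam * min p q) / lmax)"
  have E: "E > 0" by (simp add: E_def)
  have TH: "TH p lam lmax x q = min p x * E" if "0 \<le> x" "0 \<le> q" for x
    using TH_eq_min[OF assms(1) that] by (simp add: E_def)
  have "SNE p lam lmax q \<longleftrightarrow> q \<in> {0..1} \<and> (\<forall>x\<in>{0..1}. min p x \<le> min p q)"
    unfolding SNE_def using E by (auto simp: TH)
  also have "\<dots> \<longleftrightarrow> p \<le> q \<and> q \<le> 1"
    using assms by (auto simp: min_def dest: bspec[of _ _ 1])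
  finally show ?thesis .
qed

lemma SNE_capacities:
  assumes "0 < p" "p \<le> 1"
  shows "(\<lambda>q. lam * TH p lam lmax q q) ` {q. SNE p lam lmax q}
           = {lam * p * exp (- (lam * p) / lmax)}"
proof -
  have "lam * TH p lam lmax q q = lam * p * exp (- (lam * p) / lmax)" if "p \<le> q" for q
    using that assms TH_eq_min[of p q q] by simp
  moreover have "{q. SNE p lam lmax q} = {p..1}" using SNE_iff[OF assms] by auto
  moreover have "p \<in> {p..1}" using assms by simp
  ultimately show ?thesis by force
qed

definition capacity :: "real \<Rightarrow> real \<Rightarrow> real \<Rightarrow> real \<Rightarrow> real" where
  "capacity p lam lmax q = lam * r p q * q * exp (- (lam * r p q * q) / lmax)"

lemma PoA_capacity:
  "PoA p lam lmax = Sup (capacity p lam lmax ` {0<..1})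
                      / Inf ((\<lambda>q. lam * TH p lam lmax q q) ` {q. SNE p lam lmax q})"
  unfolding PoA_def capacity_def ..

lemma capacity_eq_min:
  "p > 0 \<Longrightarrow> q \<ge> 0 \<Longrightarrow>
     capacity p lam lmax q = lam * (min p q * exp (- (lam / lmax * min p q)))"
  unfolding capacity_def using r_mult_self[of p q] by (simp add: mult.assoc)

lemma optimal_capacity_low_density:
  assumes "lam > 0" "lmax > 0" "0 < p" "p \<le> 1" "lam * p \<le> lmax"
  shows "Sup (capacity p lam lmax ` {0<..1}) = lam * p * exp (- (lam * p) / lmax)"
proof (rule cSup_eq_maximum)
  show "lam * p * exp (- (lam * p) / lmax) \<in> capacity p lam lmax ` {0<..1}"
    using assms by (intro image_eqI[of _ _ p]) (auto simp: capacity_eq_min)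
next
  have "lam / lmax * p \<le> 1" using assms by (simp add: field_simps)
  fix y assume "y \<in> capacity p lam lmax ` {0<..1}"
  then obtain q where "q > 0" and y: "y = capacity p lam lmax q" by auto
  have "min p q * exp (- (lam / lmax * min p q)) \<le> p * exp (- (lam / lmax * p))"
    using \<open>lam / lmax * p \<le> 1\<close> \<open>q > 0\<close> assms by (intro mult_exp_neg_mono) auto
  then show "y \<le> lam * p * exp (- (lam * p) / lmax)"
    using y \<open>q > 0\<close> assms by (simp add: capacity_eq_min)
qed

lemma optimal_capacity_high_density:
  assumes "lam > 0" "lmax > 0" "0 < p" "p \<le> 1" "lmax \<le> lam * p"
  shows "Sup (capacity p lam lmax ` {0<..1}) = lmax * exp (-1)"
proof (rule cSup_eq_maximum)
  define q0 where "q0 = lmax / lam"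
  have q0: "0 < q0" "q0 \<le> p" using assms by (auto simp: q0_def field_simps)
  then have "capacity p lam lmax q0 = lmax * exp (-1)"
    using assms by (simp add: capacity_eq_min q0_def)
  then show "lmax * exp (-1) \<in> capacity p lam lmax ` {0<..1}"
    using q0 assms by (intro image_eqI[of _ _ q0]) auto
next
  fix y assume "y \<in> capacity p lam lmax ` {0<..1}"
  then obtain q where "q > 0" and y: "y = capacity p lam lmax q" by auto
  define z where "z = lam / lmax * min p q"
  have "y = lmax * (z * exp (- z))"
    using y assms \<open>q > 0\<close> by (simp add: capacity_eq_min z_def)
  also have "\<dots> \<le> lmax * exp (-1)"
    using mult_exp_neg_le_exp_neg_one[of z] assms by simp
  finally show "y \<le> lmax * exp (-1)" .
qed

theorem lemma2:
  fixes p lam lmax :: real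
  assumes "lam > 0" and "lmax > 0" and "0 < p" and "p \<le> 1"
  shows "PoA p lam lmax =
           (if p < lmax / lam then 1
            else lmax / (exp 1 * p * lam * exp (- p * lam / lmax)))"
proof -
  show ?thesis
  proof (cases "p < lmax / lam")
    case True
    then have "lam * p \<le> lmax" using assms by (simp add: field_simps)
    then show ?thesis
      using True assms
      unfolding PoA_capacity SNE_capacities[OF assms(3,4)]
        optimal_capacity_low_density[OF assms \<open>lam * p \<le> lmax\<close>]
      by simp
  next
    case False
    then have "lmax \<le> lam * p" using assms by (simp add: field_simps)
    then have "PoA p lam lmax = lmax * exp (-1) / (lam * p * exp (- (lam * p) / lmax))"
      unfolding PoA_capacity SNE_capacities[OF assms(3,4)]
        optimal_capacity_high_density[OF assms \<open>lmax \<le> lam * p\<close>]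
      by simp
    also have "\<dots> = lmax / (exp 1 * p * lam * exp (- p * lam / lmax))"
      by (simp add: exp_minus field_simps)
    finally show ?thesis using False by simp
  qed
qed

end
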